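(* Let $H_1,H_2$ be Hermitian matrices with $H_1=D_1^\dagger D_1$ for some matrix $D_1$, and suppose there are constants $\widetilde C_1,\widetilde C_2\ge0$ such that for every vector $\vec v$: $\|[H_1,H_2]\vec v\|\le\widetilde C_1(\|D_1\vec v\|+\|\vec v\|)$ and $\|[H_1,[H_1,H_2]]\vec v\|\le\widetilde C_2(\|H_1\vec v\|+\|\vec v\|)$. Then: (1) For every vector $\vec v$, $\|D_1\vec v\|\le\|H_1\vec v\|+\|\vec v\|$. (2) For every real $\xi$ with $(\widetilde C_1+\|H_2\|)|\xi|\le1/2$ and every vector $\vec v$, $\|H_1\exp(\mathrm{i}\xi H_2)\vec v\|\le2(\|H_1\vec v\|+\|\vec v\|)$. (3) Let $K\ge1$, $h>0$, and for $1\le k\le K$ let $H_{l_k}\in\{H_1,H_2\}$ and $\xi_k\in\mathbb{R}$ with $(\widetilde C_1+\|H_2\|)|\xi_k|h\le1/2$. Put $\vec w=\big[\prod_{k=1}^K\exp(\mathrm{i} h\xi_kH_{l_k})\big]\vec v$. Then there is a constant $\widetilde C>0$, independent of $H_1$ and $\vec v$, such that for every $\vec v$: $\|H_1\vec w\|\le\widetilde C(\|H_1\vec v\|+\|\vec v\|)$, $\|H_2\vec w\|\le\widetilde C\|\vec v\|$, $\|[H_1,H_2]\vec w\|\le\widetilde C(\sqrt{\|\vec v\|\|H_1\vec v\|}+\|\vec v\|)$, $\|[H_1,[H_1,H_2]]\vec w\|\le\widetilde C(\|H_1\vec v\|+\|\vec v\|)$, and $\|[H_2,[H_2,H_1]]\vec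 w\|\le\widetilde C(\|H_1\vec v\|+\|\vec v\|)$.
   Context: $\|\cdot\|$ is the Euclidean vector 2-norm and the induced operator norm. $[A,B]=AB-BA$. *)

theory Defs
  imports "HOL-Analysis.Analysis"
begin

type_synonym 'n cmat = "complex^'n^'n"

definition cadj :: "'n::finite cmat \<Rightarrow> 'n cmat" where
  "cadj A = (\<chi> i j. cnj (A $ j $ i))"

definition hermitian :: "'n::finite cmat \<Rightarrow> bool" where
  "hermitian A \<longleftrightarrow> cadj A = A"

definition comm :: "'n::finite cmat \<Rightarrow> 'n cmat \<Rightarrow> 'n cmat" where
  "comm A B = A ** B - B ** A"

definition csc :: "complex \<Rightarrow> 'n::finite cmat \<Rightarrow> 'n cmat" where
  "csc c A = (\<chi> i j. c * A $ i $ j)"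

fun mpow :: "'n::finite cmat \<Rightarrow> nat \<Rightarrow> 'n cmat" where
  "mpow A 0 = mat 1"
| "mpow A (Suc k) = A ** mpow A k"

definition mexp :: "'n::finite cmat \<Rightarrow> 'n cmat" where
  "mexp A = (\<Sum>k. (1 / fact k) *\<^sub>R mpow A k)"

definition opnorm :: "'n::finite cmat \<Rightarrow> real" where
  "opnorm A = onorm (\<lambda>x::complex^'n. A *v x)"

definition mprod :: "nat \<Rightarrow> (nat \<Rightarrow> 'n::finite cmat) \<Rightarrow> 'n cmat" where
  "mprod K f = foldr (\<lambda>k M. f k ** M) [1..<K+1] (mat 1)"

end

theory Submission
  imports Defs
begin

text \<open>
  (1) is Cauchy--Schwarz: \<open>\<parallel>D\<^sub>1v\<parallel>\<^sup>2 = \<langle>H\<^sub>1v, v\<rangle>\<close>.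
  (2) Along \<open>y(t) = exp(it\<xi>H\<^sub>2)v\<close>, which has constant norm, the Hermitian part of the derivative
  of \<open>\<parallel>H\<^sub>1y\<parallel>\<^sup>2\<close> cancels and only the commutator term \<open>[H\<^sub>1,H\<^sub>2]y\<close> survives. By (1) it is
  at most \<open>C\<^sub>1(\<parallel>H\<^sub>1y\<parallel> + 2\<parallel>v\<parallel>)\<close>, so Gronwall's inequality gives
  \<open>\<parallel>H\<^sub>1y(1)\<parallel> + 2\<parallel>v\<parallel> \<le> e\<^bsup>|\<xi>|C\<^sub>1\<^esup>(\<parallel>H\<^sub>1v\<parallel> + 2\<parallel>v\<parallel>) \<le> 2(\<parallel>H\<^sub>1v\<parallel> + 2\<parallel>v\<parallel>)\<close>.
  (3) Iterating (2) over the \<open>K\<close> factors (those generated by \<open>H\<^sub>1\<close> commute with it) gives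
  \<open>\<parallel>H\<^sub>1w\<parallel> + 2\<parallel>w\<parallel> \<le> 2\<^bsup>K+1\<^esup>(\<parallel>H\<^sub>1v\<parallel> + \<parallel>v\<parallel>)\<close> and \<open>\<parallel>w\<parallel> = \<parallel>v\<parallel>\<close>. The commutator bounds at \<open>w\<close>
  follow from the hypotheses, from \<open>\<parallel>D\<^sub>1w\<parallel>\<^sup>2 \<le> \<parallel>H\<^sub>1w\<parallel>\<parallel>w\<parallel>\<close>, and from
  \<open>[H\<^sub>2,[H\<^sub>2,H\<^sub>1]]w = [H\<^sub>1,H\<^sub>2]H\<^sub>2w - H\<^sub>2[H\<^sub>1,H\<^sub>2]w\<close>.
\<close>

section \<open>The matrix exponential as a Banach-algebra exponential\<close>

text \<open>
  Bounded linear endomorphisms of \<open>\<complex>\<^sup>n\<close> form a Banach algebra, so the library's exponential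
  and its derivative apply to them; the type of bounded linear maps itself has no multiplication.
\<close>

typedef (overloaded) ('n::finite) endo = "UNIV :: ((complex^'n) \<Rightarrow>\<^sub>L (complex^'n)) set"
  by simp

setup_lifting type_definition_endo

instantiation endo :: (finite) real_normed_algebra_1
begin

lift_definition zero_endo :: "'a endo" is 0 .
lift_definition one_endo :: "'a endo" is id_blinfun .
lift_definition plus_endo :: "'a endo \<Rightarrow> 'a endo \<Rightarrow> 'a endo" is "(+)" .
lift_definition minus_endo :: "'a endo \<Rightarrow> 'a endo \<Rightarrow> 'a endo" is "(-)" .
lift_definition uminus_endo :: "'a endo \<Rightarrow> 'a endo" is uminus .
lift_definition times_endo :: "'a endo \<Rightarrow> 'a endo \<Rightarrow> 'a endo" is blinfun_compose .
lift_definition scaleR_endo :: "real \<Rightarrow> 'a endo \<Rightarrow> 'a endo" is scaleR .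
lift_definition norm_endo :: "'a endo \<Rightarrow> real" is norm .
lift_definition dist_endo :: "'a endo \<Rightarrow> 'a endo \<Rightarrow> real" is dist .
lift_definition sgn_endo :: "'a endo \<Rightarrow> 'a endo" is sgn .

definition uniformity_endo :: "('a endo \<times> 'a endo) filter" where
  "uniformity_endo = (INF e\<in>{0<..}. principal {(x, y). dist x y < e})"

definition open_endo :: "'a endo set \<Rightarrow> bool" where
  "open_endo S = (\<forall>x\<in>S. \<forall>\<^sub>F (x', y) in uniformity. x' = x \<longrightarrow> y \<in> S)"

instance
proof
  fix a b c :: "'a endo" and r s :: real
  show "a * b * c = a * (b * c)" "(a + b) * c = a * c + b * c" "a * (b + c) = a * b + a * c"
    "1 * a = a" "a * 1 = a" "r *\<^sub>R a * b = r *\<^sub>R (a * b)" "a * r *\<^sub>R b = r *\<^sub>R (a * b)"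
    by (transfer; rule blinfun_eqI; simp add: blinfun.bilinear_simps)+
  show "a + b + c = a + (b + c)" "a + b = b + a" "0 + a = a" "- a + a = 0" "a - b = a + - b"
    "r *\<^sub>R (a + b) = r *\<^sub>R a + r *\<^sub>R b" "(r + s) *\<^sub>R a = r *\<^sub>R a + s *\<^sub>R a"
    "r *\<^sub>R s *\<^sub>R a = (r * s) *\<^sub>R a" "1 *\<^sub>R a = a"
    by (transfer; simp add: algebra_simps)+
  show "norm (1::'a endo) = 1" by transfer simp
  show "(0::'a endo) \<noteq> 1" by transfer (metis norm_blinfun_id norm_zero zero_neq_one)
  show "norm (a * b) \<le> norm a * norm b" by transfer (rule norm_blinfun_compose)
  show "norm (a + b) \<le> norm a + norm b" by transfer (rule norm_triangle_ineq)
  show "norm (r *\<^sub>R a) = \<bar>r\<bar> * norm a" by transfer simp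
  show "(norm a = 0) = (a = 0)" by transfer simp
  show "dist a b = norm (a - b)" by transfer (rule dist_norm)
  show "sgn a = inverse (norm a) *\<^sub>R a" by transfer (rule sgn_div_norm)
qed (simp_all add: uniformity_endo_def open_endo_def)
end

instance endo :: (finite) banach
proof
  fix X :: "nat \<Rightarrow> 'a endo"
  assume "Cauchy X"
  then have "Cauchy (\<lambda>n. Rep_endo (X n))"
    by (simp add: Cauchy_def dist_endo.rep_eq)
  then obtain L where "(\<lambda>n. Rep_endo (X n)) \<longlonglongrightarrow> L"
    using Cauchy_convergent_iff convergent_def by blast
  then have "X \<longlonglongrightarrow> Abs_endo L"
    by (simp add: lim_sequentially dist_endo.rep_eq Abs_endo_inverse)
  then show "convergent X"
    by (auto simp: convergent_def)
qed

lift_definition endo_apply :: "'n::finite endo \<Rightarrow> complex^'n \<Rightarrow> complex^'n" is blinfun_apply .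

lift_definition endo_of :: "complex^'n::finite^'n \<Rightarrow> 'n endo" is "\<lambda>M. Blinfun ((*v) M)" .

lemma endo_apply_endo_of [simp]: "endo_apply (endo_of M) x = M *v x"
  by transfer (simp add: bounded_linear_Blinfun_apply)

lemma endo_apply_mult [simp]: "endo_apply (S * T) x = endo_apply S (endo_apply T x)"
  by transfer simp

lemma endo_apply_one [simp]: "endo_apply 1 x = x"
  by transfer simp

lemma endo_eqI: "(\<And>x. endo_apply S x = endo_apply T x) \<Longrightarrow> S = T"
  by transfer (rule blinfun_eqI)

lemma endo_apply_add: "endo_apply (S + T) x = endo_apply S x + endo_apply T x"
  by transfer (rule blinfun.add_left)

lemma endo_apply_scaleR [simp]: "endo_apply (r *\<^sub>R S) x = r *\<^sub>R endo_apply S x"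
  by transfer (rule blinfun.scaleR_left)

lemma norm_endo_apply: "norm (endo_apply S x) \<le> norm S * norm x"
  by transfer (rule norm_blinfun)

lemma bounded_linear_endo_apply_left: "bounded_linear (\<lambda>S. endo_apply S x)"
  by (rule bounded_linear_intro[where K = "norm x"]) (simp_all add: endo_apply_add norm_endo_apply)

lemma scaleR_matrix_vector_mult: "(r *\<^sub>R M) *v x = r *\<^sub>R (M *v (x::complex^'n::finite))"
  by (simp add: vec_eq_iff matrix_vector_mult_def scaleR_sum_right)

lemma matrix_vector_mult_scaleR_right: "M *v (r *\<^sub>R x) = r *\<^sub>R (M *v (x::complex^'n::finite))"
  by (simp add: vec_eq_iff matrix_vector_mult_def scaleR_sum_right)

lemma endo_of_mult: "endo_of (A ** B) = endo_of A * endo_of B"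
  by (rule endo_eqI) (simp add: matrix_vector_mul_assoc)

lemma endo_of_mpow: "endo_of (mpow A k) = endo_of A ^ k"
proof (induction k)
  case 0
  show ?case by (rule endo_eqI) simp
qed (simp add: endo_of_mult)

lemma endo_of_scaleR: "endo_of (r *\<^sub>R M) = r *\<^sub>R endo_of M"
  by (rule endo_eqI) (simp add: scaleR_matrix_vector_mult)

lemma bounded_linear_vec_lambda:
  assumes "\<And>i. bounded_linear (f i)"
  shows "bounded_linear (\<lambda>x. \<chi> i. f i x :: 'a::real_normed_vector^'n::finite)"
proof -
  obtain K where K: "\<And>i x. norm (f i x) \<le> norm x * K i"
    using bounded_linear.bounded[OF assms] by metis
  show ?thesis
  proof (rule bounded_linear_intro[where K = "\<Sum>i\<in>UNIV. K i"])
    show "(\<chi> i. f i (x + y)) = (\<chi> i. f i x) + (\<chi> i. f i y)" for x y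
      by (simp add: vec_eq_iff linear_add[OF bounded_linear.linear[OF assms]])
    show "(\<chi> i. f i (r *\<^sub>R x)) = r *\<^sub>R (\<chi> i. f i x)" for r x
      by (simp add: vec_eq_iff linear_scale[OF bounded_linear.linear[OF assms]])
    show "norm (\<chi> i. f i x) \<le> norm x * (\<Sum>i\<in>UNIV. K i)" for x
    proof -
      have "norm (\<chi> i. f i x) \<le> (\<Sum>i\<in>UNIV. norm (f i x))"
        unfolding norm_vec_def by (rule order_trans[OF L2_set_le_sum]) simp_all
      also have "\<dots> \<le> norm x * (\<Sum>i\<in>UNIV. K i)"
        by (simp add: sum_distrib_left sum_mono K)
      finally show ?thesis .
    qed
  qed
qed

definition matrix_of_endo :: "'n::finite endo \<Rightarrow> complex^'n^'n" where
  "matrix_of_endo S = (\<chi> i j. endo_apply S (axis j 1) $ i)"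

lemma bounded_linear_matrix_of_endo: "bounded_linear matrix_of_endo"
  unfolding matrix_of_endo_def
  by (intro bounded_linear_vec_lambda bounded_linear_compose[OF bounded_linear_vec_nth]
      bounded_linear_endo_apply_left)

lemma matrix_of_endo_endo_of: "matrix_of_endo (endo_of M) = M"
  by (simp add: matrix_of_endo_def vec_eq_iff matrix_vector_mult_def axis_def if_distrib cong: if_cong)

lemma bounded_linear_matrix_vector_mult_left:
  "bounded_linear (\<lambda>M::complex^'n::finite^'m::finite. M *v v)"
  unfolding linear_conv_bounded_linear[symmetric]
  by (rule linearI) (simp_all add: matrix_vector_mult_add_rdistrib scaleR_matrix_vector_mult)

lemma mexp_mult_vector: "mexp A *v v = endo_apply (exp (endo_of A)) v"
proof -
  have exp_sums: "(\<lambda>k. (1 / fact k) *\<^sub>R endo_of A ^ k) sums exp (endo_of A)"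
    using exp_converges[of "endo_of A"] by (simp add: divide_inverse)
  have matrix_sums: "(\<lambda>k. (1 / fact k) *\<^sub>R mpow A k) sums matrix_of_endo (exp (endo_of A))"
    using bounded_linear.sums[OF bounded_linear_matrix_of_endo exp_sums]
    by (simp add: endo_of_mpow[symmetric] endo_of_scaleR[symmetric] matrix_of_endo_endo_of)
  then have "mexp A = matrix_of_endo (exp (endo_of A))"
    unfolding mexp_def by (rule sums_unique[symmetric])
  then have "(\<lambda>k. ((1 / fact k) *\<^sub>R mpow A k) *v v) sums (mexp A *v v)"
    using bounded_linear.sums[OF bounded_linear_matrix_vector_mult_left matrix_sums] by simp
  moreover have "(\<lambda>k. ((1 / fact k) *\<^sub>R mpow A k) *v v) sums endo_apply (exp (endo_of A)) v"
    using bounded_linear.sums[OF bounded_linear_endo_apply_left exp_sums]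
    by (simp add: endo_of_mpow[symmetric] endo_of_scaleR[symmetric])
  ultimately show ?thesis
    by (rule sums_unique2)
qed

lemma mexp_zero_mult_vector: "mexp 0 *v v = (v::complex^'n::finite)"
proof -
  have "endo_of 0 = (0 :: 'n endo)"
    using endo_of_scaleR[of 0 "0 :: complex^'n^'n"] by simp
  then show ?thesis
    by (simp add: mexp_mult_vector)
qed

lemma has_vector_derivative_mexp:
  "((\<lambda>t. mexp (t *\<^sub>R A) *v v) has_vector_derivative A *v (mexp (t *\<^sub>R A) *v v)) (at t)"
proof -
  have "((\<lambda>t. endo_apply (exp (t *\<^sub>R endo_of A)) v) has_vector_derivative
      endo_apply (endo_of A * exp (t *\<^sub>R endo_of A)) v) (at t)"
    by (rule bounded_linear.has_vector_derivative[OF bounded_linear_endo_apply_left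
          exp_scaleR_has_vector_derivative_left])
  then show ?thesis
    by (simp add: mexp_mult_vector endo_of_scaleR)
qed

section \<open>Inner products and Hermitian matrices\<close>

lemma csc_mult_vector: "csc c M *v x = c *s (M *v x)"
  by (simp add: vec_eq_iff csc_def matrix_vector_mult_def sum_distrib_left mult.assoc)

lemma norm_vector_scalar_mult: "norm (c *s x) = norm c * norm (x::complex^'n::finite)"
  by (simp add: norm_vec_def norm_mult L2_set_right_distrib)

lemma csc_i_of_real: "csc (\<i> * of_real r) M = r *\<^sub>R csc \<i> M"
  by (simp add: vec_eq_iff csc_def) (simp add: scaleR_conv_of_real)

lemma csc_i_of_real_mult_vector: "csc (\<i> * of_real r) M *v x = r *\<^sub>R (\<i> *s (M *v x))"
  by (simp add: csc_i_of_real scaleR_matrix_vector_mult csc_mult_vector)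

lemma inner_vec_complex: "inner x y = Re (\<Sum>i\<in>UNIV. x $ i * cnj (y $ i))"
  by (simp add: inner_vec_def inner_complex_def)

lemma inner_i_scalar_mult: "inner x (\<i> *s y) = - inner (\<i> *s x) (y::complex^'n::finite)"
  by (simp add: inner_vec_complex Re_sum[symmetric] sum_negf[symmetric] algebra_simps)

lemma inner_matrix_vector_mult: "inner x (M *v y) = inner (cadj M *v x) y"
proof -
  have "(\<Sum>i\<in>UNIV. x $ i * cnj ((M *v y) $ i))
      = (\<Sum>i\<in>UNIV. \<Sum>j\<in>UNIV. x $ i * cnj (M $ i $ j) * cnj (y $ j))"
    by (simp add: matrix_vector_mult_def sum_distrib_left mult.assoc)
  also have "\<dots> = (\<Sum>j\<in>UNIV. \<Sum>i\<in>UNIV. x $ i * cnj (M $ i $ j) * cnj (y $ j))"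
    by (rule sum.swap)
  also have "\<dots> = (\<Sum>j\<in>UNIV. (cadj M *v x) $ j * cnj (y $ j))"
    by (simp add: matrix_vector_mult_def cadj_def sum_distrib_right sum_distrib_left algebra_simps)
  finally show ?thesis
    by (simp add: inner_vec_complex)
qed

lemma hermitian_inner_i_scalar_mult:
  assumes "hermitian H"
  shows "inner x (\<i> *s (H *v x)) = 0"
proof -
  have "inner x (\<i> *s (H *v x)) = inner (H *v x) (\<i> *s x)"
    using assms by (simp add: vector_scalar_commute[symmetric] inner_matrix_vector_mult hermitian_def)
  also have "\<dots> = - inner x (\<i> *s (H *v x))"
    using inner_i_scalar_mult[of "H *v x" x] by (simp add: inner_commute)
  finally show ?thesis
    by simp
qed

lemma norm_factor_squared_le:
  assumes "H = cadj D ** D"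
  shows "(norm (D *v v))\<^sup>2 \<le> norm (H *v v) * norm v"
proof -
  have "(norm (D *v v))\<^sup>2 = inner (H *v v) v"
    by (simp add: power2_norm_eq_inner inner_matrix_vector_mult assms matrix_vector_mul_assoc)
  also have "\<dots> \<le> norm (H *v v) * norm v"
    by (rule norm_cauchy_schwarz)
  finally show ?thesis .
qed

lemma norm_factor_le:
  assumes "H = cadj D ** D"
  shows "norm (D *v v) \<le> norm (H *v v) + norm v"
proof (rule power2_le_imp_le)
  show "(norm (D *v v))\<^sup>2 \<le> (norm (H *v v) + norm v)\<^sup>2"
  proof -
    have "norm (H *v v) * norm v \<le> (norm (H *v v) + norm v) * (norm (H *v v) + norm v)"
      by (intro mult_mono) auto
    then show ?thesis
      using norm_factor_squared_le[OF assms, of v] by (simp add: power2_eq_square)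
  qed
qed simp

lemma comm_bound_by_square:
  assumes "G = cadj E ** E" and "c \<ge> 0"
    and "norm (comm G H *v x) \<le> c * (norm (E *v x) + norm x)"
  shows "norm (comm G H *v x) \<le> c * (norm (G *v x) + 2 * norm x)"
proof -
  have "c * (norm (E *v x) + norm x) \<le> c * (norm (G *v x) + 2 * norm x)"
    using norm_factor_le[OF assms(1), of x] by (intro mult_left_mono assms(2)) simp
  with assms(3) show ?thesis
    by linarith
qed

lemma opnorm_bound: "norm (H *v x) \<le> opnorm H * norm (x::complex^'n::finite)"
  unfolding opnorm_def by (rule onorm[OF matrix_vector_mul_bounded_linear])

lemma opnorm_nonneg: "opnorm (H::complex^'n::finite^'n) \<ge> 0"
  unfolding opnorm_def by (rule onorm_pos_le[OF matrix_vector_mul_bounded_linear])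

section \<open>Unitary evolution and Gronwall's inequality\<close>

lemma has_real_derivative_inner_self:
  assumes "(y has_vector_derivative y') (at t)"
  shows "((\<lambda>t. inner (y t) (y t)) has_real_derivative 2 * inner (y t) y') (at t)"
  using bounded_bilinear.has_vector_derivative[OF bounded_bilinear_inner assms assms]
  by (simp add: has_real_derivative_iff_has_vector_derivative inner_commute)

lemma norm_mexp_hermitian:
  assumes "hermitian H"
  shows "norm (mexp (csc (\<i> * of_real r) H) *v v) = norm v"
proof -
  define y where "y t = mexp (t *\<^sub>R csc (\<i> * of_real r) H) *v v" for t
  have "((\<lambda>t. inner (y t) (y t)) has_real_derivative 0) (at t)" for t
    using has_real_derivative_inner_self[OF has_vector_derivative_mexp, of "csc (\<i> * of_real r) H" v t]
    by (simp add: y_def csc_i_of_real_mult_vector hermitian_inner_i_scalar_mult[OF assms])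
  then have "inner (y 1) (y 1) = inner (y 0) (y 0)"
    using DERIV_isconst_all[of "\<lambda>t. inner (y t) (y t)"] by blast
  then show ?thesis
    by (simp add: y_def norm_eq_sqrt_inner mexp_zero_mult_vector)
qed

lemma norm_le_exp_growth:
  fixes u u' :: "real \<Rightarrow> 'a::real_inner"
  assumes deriv: "\<And>t. (u has_vector_derivative u' t) (at t)"
    and growth: "\<And>t. inner (u t) (u' t) \<le> c * norm (u t) * (norm (u t) + b)"
    and c: "c \<ge> 0" and b: "b \<ge> 0" and T: "T \<ge> 0"
  shows "norm (u T) + b \<le> exp (c * T) * (norm (u 0) + b)"
proof -
  txt \<open>The term \<open>e\<^sup>2\<close> keeps the square root differentiable where \<open>u\<close> vanishes.\<close>
  have approx: "norm (u T) + b \<le> exp (c * T) * (norm (u 0) + b) + exp (c * T) * e" if e: "e > 0" for e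
  proof -
    define g where "g t = (norm (u t))\<^sup>2 + e\<^sup>2" for t
    define F where "F t = exp (- (c * t)) * (sqrt (g t) + b)" for t
    have g_pos: "g t > 0" for t
      using e by (simp add: g_def add_nonneg_pos)
    then have sqrt_g_pos: "sqrt (g t) > 0" for t
      by simp
    have norm_le: "norm (u t) \<le> sqrt (g t)" for t
      by (rule real_le_rsqrt) (simp add: g_def)
    have "\<exists>D. (F has_real_derivative D) (at t) \<and> D \<le> 0" for t
    proof -
      have g_deriv: "(g has_real_derivative 2 * inner (u t) (u' t)) (at t)"
        unfolding g_def[abs_def] power2_norm_eq_inner
        using DERIV_add[OF has_real_derivative_inner_self[OF deriv] DERIV_const[of "e\<^sup>2"]] by simp
      have sqrt_deriv: "((\<lambda>t. sqrt (g t)) has_real_derivative inner (u t) (u' t) / sqrt (g t)) (at t)"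
        by (rule DERIV_cong[OF DERIV_chain2[OF DERIV_real_sqrt[OF g_pos[of t]] g_deriv]])
          (use sqrt_g_pos[of t] in \<open>simp add: field_simps\<close>)
      have exp_deriv: "((\<lambda>t. exp (- (c * t))) has_real_derivative exp (- (c * t)) * (- c)) (at t)"
        by (auto intro!: derivative_eq_intros)
      have "c * norm (u t) * (norm (u t) + b) \<le> c * sqrt (g t) * (sqrt (g t) + b)"
        using norm_le[of t] sqrt_g_pos[of t] c b by (intro mult_mono) auto
      with growth[of t] have "inner (u t) (u' t) \<le> c * sqrt (g t) * (sqrt (g t) + b)"
        by linarith
      then have slope: "inner (u t) (u' t) / sqrt (g t) \<le> c * (sqrt (g t) + b)"
        using sqrt_g_pos[of t] by (simp add: pos_divide_le_eq mult_ac)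
      have "(F has_real_derivative
          exp (- (c * t)) * (inner (u t) (u' t) / sqrt (g t) - c * (sqrt (g t) + b))) (at t)"
        unfolding F_def
        by (rule DERIV_cong[OF DERIV_mult[OF exp_deriv DERIV_add[OF sqrt_deriv DERIV_const]]])
          (simp add: algebra_simps)
      moreover have "exp (- (c * t)) * (inner (u t) (u' t) / sqrt (g t) - c * (sqrt (g t) + b)) \<le> 0"
        using slope by (simp add: mult_nonneg_nonpos)
      ultimately show ?thesis
        by blast
    qed
    then have "F T \<le> F 0"
      by (rule DERIV_nonpos_imp_nonincreasing[OF T])
    have "norm (u T) + b \<le> sqrt (g T) + b"
      using norm_le[of T] by simp
    also have "\<dots> = exp (c * T) * F T"
      by (simp add: F_def exp_minus)
    also have "\<dots> \<le> exp (c * T) * F 0"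
      using \<open>F T \<le> F 0\<close> by simp
    also have "\<dots> = exp (c * T) * (sqrt ((norm (u 0))\<^sup>2 + e\<^sup>2) + b)"
      by (simp add: F_def g_def)
    also have "\<dots> \<le> exp (c * T) * (norm (u 0) + e + b)"
      using sqrt_add_le_add_sqrt[of "(norm (u 0))\<^sup>2" "e\<^sup>2"] e by simp
    finally show ?thesis
      by (simp add: algebra_simps)
  qed
  show ?thesis
  proof (rule field_le_epsilon)
    fix \<epsilon> :: real
    assume "\<epsilon> > 0"
    then show "norm (u T) + b \<le> exp (c * T) * (norm (u 0) + b) + \<epsilon>"
      using approx[of "\<epsilon> / exp (c * T)"] by simp
  qed
qed

lemma norm_mult_mexp_le_exp:
  fixes A H :: "complex^'n::finite^'n"
  assumes hH: "hermitian H" and c: "c \<ge> 0" and b: "b \<ge> 0"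
    and comm_bound: "\<And>x. norm (comm A H *v x) \<le> c * (norm (A *v x) + b * norm x)"
  shows "norm (A *v (mexp (csc (\<i> * of_real r) H) *v v)) + b * norm v
    \<le> exp (\<bar>r\<bar> * c) * (norm (A *v v) + b * norm v)"
proof -
  define S where "S = csc (\<i> * of_real r) H"
  define y where "y t = mexp (t *\<^sub>R S) *v v" for t
  define u where "u t = A *v y t" for t
  have norm_y: "norm (y t) = norm v" for t
    using norm_mexp_hermitian[OF hH, of "t * r" v] by (simp add: y_def S_def csc_i_of_real del: of_real_mult)
  have u_deriv: "(u has_vector_derivative A *v (S *v y t)) (at t)" for t
    unfolding u_def[abs_def] y_def
    by (rule bounded_linear.has_vector_derivative[OF matrix_vector_mul_bounded_linear has_vector_derivative_mexp])
  have "inner (u t) (A *v (S *v y t)) \<le> \<bar>r\<bar> * c * norm (u t) * (norm (u t) + b * norm v)" for t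
  proof -
    have "A *v (H *v y t) = H *v u t + comm A H *v y t"
      by (simp add: u_def comm_def matrix_vector_mult_diff_rdistrib matrix_vector_mul_assoc)
    then have "inner (u t) (A *v (S *v y t)) = r * inner (u t) (\<i> *s (comm A H *v y t))"
      by (simp add: S_def csc_i_of_real_mult_vector matrix_vector_mult_scaleR_right vector_scalar_commute
          inner_add_right hermitian_inner_i_scalar_mult[OF hH])
    also have "\<dots> \<le> \<bar>r\<bar> * \<bar>inner (u t) (\<i> *s (comm A H *v y t))\<bar>"
      by (metis abs_ge_self abs_mult)
    also have "\<dots> \<le> \<bar>r\<bar> * (norm (u t) * norm (comm A H *v y t))"
      using Cauchy_Schwarz_ineq2[of "u t" "\<i> *s (comm A H *v y t)"]
      by (intro mult_left_mono) (simp_all add: norm_vector_scalar_mult)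
    also have "\<dots> \<le> \<bar>r\<bar> * (norm (u t) * (c * (norm (u t) + b * norm v)))"
      using comm_bound[of "y t"] by (intro mult_left_mono) (simp_all add: u_def norm_y)
    finally show ?thesis
      by (simp add: mult_ac)
  qed
  from norm_le_exp_growth[OF u_deriv this _ _ zero_le_one] c b
  show ?thesis
    by (simp add: u_def y_def S_def mexp_zero_mult_vector)
qed

corollary norm_mult_mexp_le_double:
  fixes A H :: "complex^'n::finite^'n"
  assumes "hermitian H" and "c \<ge> 0"
    and "\<And>x. norm (comm A H *v x) \<le> c * (norm (A *v x) + 2 * norm x)"
    and "\<bar>r\<bar> * c \<le> 1/2"
  shows "norm (A *v (mexp (csc (\<i> * of_real r) H) *v v)) + 2 * norm v
    \<le> 2 * (norm (A *v v) + 2 * norm v)"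
proof -
  have "exp (\<bar>r\<bar> * c) \<le> 2"
    using assms(4) exp_half_le2 by (meson exp_le_cancel_iff order_trans)
  then have "exp (\<bar>r\<bar> * c) * (norm (A *v v) + 2 * norm v) \<le> 2 * (norm (A *v v) + 2 * norm v)"
    by (rule mult_right_mono) simp
  then show ?thesis
    using norm_mult_mexp_le_exp[OF assms(1,2) _ assms(3), of r v] by simp
qed

section \<open>Products of evolutions\<close>

lemma mprod_Suc:
  fixes f :: "nat \<Rightarrow> complex^'n::finite^'n"
  shows "mprod (Suc K) f = mprod K f ** f (Suc K)"
proof -
  have foldr_mult: "foldr (\<lambda>k M. f k ** M) xs B = foldr (\<lambda>k M. f k ** M) xs (mat 1) ** B" for xs and B :: "complex^'n^'n"
    by (induction xs) (simp_all add: matrix_mul_assoc)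
  show ?thesis
    unfolding mprod_def using foldr_mult[of "[1..<K+1]" "f (Suc K)"] by simp
qed

lemma norm_mprod_mult_vector:
  assumes "\<And>k x. k \<in> {1..K} \<Longrightarrow> norm (f k *v x) = norm x"
  shows "norm (mprod K f *v x) = norm x"
  using assms
proof (induction K arbitrary: x)
  case 0
  then show ?case by (simp add: mprod_def)
next
  case (Suc K)
  then show ?case
    by (simp add: mprod_Suc matrix_vector_mul_assoc[symmetric])
qed

lemma mprod_mult_vector_le:
  fixes \<Phi> :: "complex^'n::finite \<Rightarrow> real"
  assumes "q \<ge> 0" and "\<And>k x. k \<in> {1..K} \<Longrightarrow> \<Phi> (f k *v x) \<le> q * \<Phi> x"
  shows "\<Phi> (mprod K f *v x) \<le> q ^ K * \<Phi> x"
  using assms(2)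
proof (induction K arbitrary: x)
  case 0
  then show ?case by (simp add: mprod_def)
next
  case (Suc K)
  have "\<Phi> (mprod (Suc K) f *v x) = \<Phi> (mprod K f *v (f (Suc K) *v x))"
    by (simp add: mprod_Suc matrix_vector_mul_assoc)
  also have "\<dots> \<le> q ^ K * \<Phi> (f (Suc K) *v x)"
    using Suc by simp
  also have "\<dots> \<le> q ^ K * (q * \<Phi> x)"
    using Suc.prems[of "Suc K" x] assms(1) by (simp add: mult_left_mono)
  finally show ?case
    by (simp add: mult_ac)
qed

lemma norm_double_comm_mult_vector_le:
  fixes G H :: "complex^'n::finite^'n"
  assumes c: "c \<ge> 0" and b: "b \<ge> 0"
    and comm_bound: "\<And>x. norm (comm G H *v x) \<le> c * (norm (G *v x) + b * norm x)"
  shows "norm (comm H (comm H G) *v w) \<le> c * (3 * opnorm H + c) * (norm (G *v w) + b * norm w)"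
proof -
  define h where "h = opnorm H"
  define Y where "Y = norm (G *v w) + b * norm w"
  have h: "h \<ge> 0" and H_bound: "\<And>x. norm (H *v x) \<le> h * norm x"
    by (simp_all add: h_def opnorm_nonneg opnorm_bound)
  have comm_w: "norm (comm G H *v w) \<le> c * Y"
    using comm_bound by (simp add: Y_def)
  have "norm (G *v (H *v w)) \<le> norm (H *v (G *v w)) + norm (comm G H *v w)"
    using norm_triangle_ineq[of "H *v (G *v w)" "comm G H *v w"]
    by (simp add: comm_def matrix_vector_mult_diff_rdistrib matrix_vector_mul_assoc)
  also have "\<dots> \<le> h * Y + c * Y"
    using H_bound[of "G *v w"] mult_left_mono[of "norm (G *v w)" Y h] h b comm_w
    by (simp add: Y_def)
  finally have "norm (G *v (H *v w)) \<le> (h + c) * Y"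
    by (simp add: algebra_simps)
  moreover have "b * norm (H *v w) \<le> h * Y"
  proof -
    have "b * norm (H *v w) \<le> h * (b * norm w)"
      using mult_left_mono[OF H_bound[of w] b] by (simp add: mult_ac)
    also have "\<dots> \<le> h * Y"
      using h by (intro mult_left_mono) (simp_all add: Y_def)
    finally show ?thesis .
  qed
  ultimately have "c * (norm (G *v (H *v w)) + b * norm (H *v w)) \<le> c * ((2 * h + c) * Y)"
    by (intro mult_left_mono c) (simp add: algebra_simps)
  then have comm_Hw: "norm (comm G H *v (H *v w)) \<le> c * ((2 * h + c) * Y)"
    using comm_bound[of "H *v w"] by linarith
  have H_comm_w: "norm (H *v (comm G H *v w)) \<le> h * (c * Y)"
    using H_bound[of "comm G H *v w"] mult_left_mono[OF comm_w h] by linarith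
  have identity: "comm H (comm H G) *v w = comm G H *v (H *v w) - H *v (comm G H *v w)"
    by (simp add: comm_def matrix_vector_mult_diff_rdistrib matrix_vector_mult_diff_distrib
        matrix_vector_mul_assoc[symmetric])
  have "norm (comm H (comm H G) *v w) \<le> norm (comm G H *v (H *v w)) + norm (H *v (comm G H *v w))"
    unfolding identity by (rule norm_triangle_ineq4)
  also have "\<dots> \<le> c * ((2 * h + c) * Y) + h * (c * Y)"
    using comm_Hw H_comm_w by (rule add_mono)
  also have "\<dots> = c * (3 * h + c) * Y"
    by (simp add: algebra_simps)
  finally show ?thesis
    by (simp add: h_def Y_def)
qed

lemma norm_factor_le_sqrt_growth:
  assumes E: "G = cadj E ** E" and M: "M \<ge> 0"
    and norm_w: "norm w = norm v" and G_w: "norm (G *v w) \<le> M * (norm (G *v v) + norm v)"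
  shows "norm (E *v w) \<le> sqrt M * (sqrt (norm v * norm (G *v v)) + norm v)"
proof (rule power2_le_imp_le)
  define S where "S = sqrt (norm v * norm (G *v v))"
  have "(norm (E *v w))\<^sup>2 \<le> norm (G *v w) * norm w"
    by (rule norm_factor_squared_le[OF E])
  also have "\<dots> \<le> M * (norm (G *v v) + norm v) * norm v"
    using G_w norm_w by (simp add: mult_right_mono)
  also have "\<dots> = M * (S\<^sup>2 + (norm v)\<^sup>2)"
    by (simp add: S_def power2_eq_square algebra_simps)
  also have "\<dots> \<le> M * (S + norm v)\<^sup>2"
    using M by (intro mult_left_mono) (auto simp: S_def power2_eq_square algebra_simps)
  finally show "(norm (E *v w))\<^sup>2 \<le> (sqrt M * (sqrt (norm v * norm (G *v v)) + norm v))\<^sup>2"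
    using M by (simp add: S_def power_mult_distrib)
qed (simp add: M)

lemma mprod_evolution_growth:
  fixes G H :: "complex^'n::finite^'n" and \<tau> :: "nat \<Rightarrow> real" and l :: "nat \<Rightarrow> nat"
  assumes hG: "hermitian G" and hH: "hermitian H" and c: "c \<ge> 0"
    and comm_bound: "\<And>x. norm (comm G H *v x) \<le> c * (norm (G *v x) + 2 * norm x)"
    and small: "\<forall>k\<in>{1..K}. \<bar>\<tau> k\<bar> * c \<le> 1/2"
  defines "f \<equiv> \<lambda>k. mexp (csc (\<i> * of_real (\<tau> k)) (if l k = 1 then G else H))"
  shows "norm (mprod K f *v v) = norm v"
    and "norm (G *v (mprod K f *v v)) + 2 * norm (mprod K f *v v) \<le> 2 ^ K * (norm (G *v v) + 2 * norm v)"
proof -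
  have unitary: "norm (f k *v x) = norm x" for k x
    by (simp add: f_def norm_mexp_hermitian hG hH)
  then show "norm (mprod K f *v v) = norm v"
    by (rule norm_mprod_mult_vector)
  have "norm (G *v (f k *v x)) + 2 * norm (f k *v x) \<le> 2 * (norm (G *v x) + 2 * norm x)"
    if "k \<in> {1..K}" for k x
  proof (cases "l k = 1")
    case True
    have "norm (comm G G *v y) \<le> 0 * (norm (G *v y) + 2 * norm y)" for y
      by (simp add: comm_def)
    from norm_mult_mexp_le_double[OF hG order_refl this, of "\<tau> k" x]
    show ?thesis
      using True unitary[of k x] by (simp add: f_def)
  next
    case False
    from norm_mult_mexp_le_double[OF hH c comm_bound, of "\<tau> k" x]
    show ?thesis
      using False unitary[of k x] small that by (simp add: f_def)
  qed
  then show "norm (G *v (mprod K f *v v)) + 2 * norm (mprod K f *v v) \<le> 2 ^ K * (norm (G *v v) + 2 * norm v)"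
    using mprod_mult_vector_le[where q = 2 and \<Phi> = "\<lambda>x. norm (G *v x) + 2 * norm x"] by simp
qed

definition evolution_constant :: "real \<Rightarrow> real \<Rightarrow> real \<Rightarrow> nat \<Rightarrow> real" where
  "evolution_constant C1 C2 h K =
    (let M = 2 ^ Suc K in M + h + C1 * (sqrt M + 1) + C2 * M + C1 * (3 * h + C1) * M)"

lemma evolution_constant_pos:
  assumes "C1 \<ge> 0" and "C2 \<ge> 0" and "h \<ge> 0"
  shows "evolution_constant C1 C2 h K > 0"
  using assms by (simp add: evolution_constant_def Let_def add_pos_nonneg)

lemma evolved_vector_bounds:
  fixes G E H :: "complex^'n::finite^'n" and \<tau> :: "nat \<Rightarrow> real" and l :: "nat \<Rightarrow> nat"
  assumes hG: "hermitian G" and hH: "hermitian H" and E: "G = cadj E ** E"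
    and C1: "C1 \<ge> 0" and C2: "C2 \<ge> 0"
    and b1: "\<forall>v. norm (comm G H *v v) \<le> C1 * (norm (E *v v) + norm v)"
    and b2: "\<forall>v. norm (comm G (comm G H) *v v) \<le> C2 * (norm (G *v v) + norm v)"
    and small: "\<forall>k\<in>{1..K}. \<bar>\<tau> k\<bar> * C1 \<le> 1/2"
  defines "C \<equiv> evolution_constant C1 C2 (opnorm H) K"
  shows "let w = mprod K (\<lambda>k. mexp (csc (\<i> * of_real (\<tau> k)) (if l k = 1 then G else H))) *v v in
      norm (G *v w) \<le> C * (norm (G *v v) + norm v)
    \<and> norm (H *v w) \<le> C * norm v
    \<and> norm (comm G H *v w) \<le> C * (sqrt (norm v * norm (G *v v)) + norm v)
    \<and> norm (comm G (comm G H) *v w) \<le> C * (norm (G *v v) + norm v)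
    \<and> norm (comm H (comm H G) *v w) \<le> C * (norm (G *v v) + norm v)"
proof -
  define w where "w = mprod K (\<lambda>k. mexp (csc (\<i> * of_real (\<tau> k)) (if l k = 1 then G else H))) *v v"
  define X where "X = norm (G *v v) + norm v"
  define S where "S = sqrt (norm v * norm (G *v v))"
  define M :: real where "M = 2 ^ Suc K"
  define h where "h = opnorm H"
  have h: "h \<ge> 0"
    by (simp add: h_def opnorm_nonneg)
  have comm_G: "\<And>x. norm (comm G H *v x) \<le> C1 * (norm (G *v x) + 2 * norm x)"
    using b1 by (blast intro: comm_bound_by_square[OF E C1])
  note growth = mprod_evolution_growth[OF hG hH C1 comm_G small, of l v, folded w_def]
  have norm_w: "norm w = norm v"
    by (rule growth(1))
  have "norm (G *v w) + 2 * norm w \<le> 2 ^ K * (2 * X)"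
    using growth(2) by (rule order_trans) (simp add: X_def)
  then have G_w: "norm (G *v w) + 2 * norm w \<le> M * X"
    by (simp add: M_def)
  have X: "X \<ge> 0" and S: "S \<ge> 0"
    by (simp_all add: X_def S_def)
  have bound_G: "norm (G *v w) \<le> M * X"
    using G_w norm_ge_zero[of w] by linarith
  have bound_H: "norm (H *v w) \<le> h * norm v"
    using opnorm_bound[of H w] norm_w by (simp add: h_def)
  have bound_comm: "norm (comm G H *v w) \<le> C1 * (sqrt M + 1) * (S + norm v)"
  proof -
    have E_w: "norm (E *v w) \<le> sqrt M * (S + norm v)"
      using bound_G norm_w unfolding S_def X_def
      by (intro norm_factor_le_sqrt_growth[OF E]) (simp_all add: M_def)
    have "norm (comm G H *v w) \<le> C1 * (norm (E *v w) + norm w)"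
      using b1 by blast
    also have "\<dots> \<le> C1 * (sqrt M * (S + norm v) + (S + norm v))"
      using E_w norm_w S by (intro mult_left_mono C1) simp_all
    finally show ?thesis
      by (simp add: algebra_simps)
  qed
  have bound_GG: "norm (comm G (comm G H) *v w) \<le> C2 * M * X"
  proof -
    have "norm (comm G (comm G H) *v w) \<le> C2 * (norm (G *v w) + norm w)"
      using b2 by blast
    also have "\<dots> \<le> C2 * (M * X)"
      using G_w norm_ge_zero[of w] by (intro mult_left_mono C2) linarith
    finally show ?thesis
      by (simp add: mult.assoc)
  qed
  have bound_HH: "norm (comm H (comm H G) *v w) \<le> C1 * (3 * h + C1) * M * X"
  proof -
    have "norm (comm H (comm H G) *v w) \<le> C1 * (3 * h + C1) * (norm (G *v w) + 2 * norm w)"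
      using norm_double_comm_mult_vector_le[OF C1 _ comm_G] by (simp add: h_def)
    also have "\<dots> \<le> C1 * (3 * h + C1) * (M * X)"
      using G_w C1 h by (intro mult_left_mono) simp_all
    finally show ?thesis
      by (simp add: mult.assoc)
  qed
  have enlarge: "a \<le> C * Y" if "a \<le> k * Y" "k \<le> C" "Y \<ge> 0" for a k Y :: real
    using that by (meson mult_right_mono order_trans)
  have "M \<le> C" "h \<le> C" "C1 * (sqrt M + 1) \<le> C" "C2 * M \<le> C" "C1 * (3 * h + C1) * M \<le> C"
    using C1 C2 h by (simp_all add: C_def evolution_constant_def M_def h_def Let_def)
  then show ?thesis
    unfolding Let_def w_def[symmetric] X_def[symmetric] S_def[symmetric]
    using enlarge[OF bound_G] enlarge[OF bound_H] enlarge[OF bound_comm] enlarge[OF bound_GG]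
      enlarge[OF bound_HH] X S
    by (simp add: mult.assoc)
qed

theorem lemma7:
  fixes H1 H2 D1 :: "complex^'n::finite^'n" and C1 C2 :: real
  assumes herm1: "hermitian H1" and herm2: "hermitian H2"
    and D1: "H1 = cadj D1 ** D1"
    and C1: "C1 \<ge> 0" and C2: "C2 \<ge> 0"
    and b1: "\<forall>v. norm (comm H1 H2 *v v) \<le> C1 * (norm (D1 *v v) + norm v)"
    and b2: "\<forall>v. norm (comm H1 (comm H1 H2) *v v) \<le> C2 * (norm (H1 *v v) + norm v)"
  shows
   "(\<forall>v. norm (D1 *v v) \<le> norm (H1 *v v) + norm v)
  \<and> (\<forall>(\<xi>::real) v. (C1 + opnorm H2) * \<bar>\<xi>\<bar> \<le> 1/2 \<longrightarrow>
        norm (H1 *v (mexp (csc (\<i> * of_real \<xi>) H2) *v v)) \<le> 2 * (norm (H1 *v v) + norm v))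
  \<and> (\<forall>(K::nat) (h::real) (l::nat \<Rightarrow> nat) (\<xi>::nat \<Rightarrow> real).
        K \<ge> 1 \<longrightarrow> h > 0 \<longrightarrow> (\<forall>k\<in>{1..K}. l k \<in> {1, 2}) \<longrightarrow>
        (\<forall>k\<in>{1..K}. (C1 + opnorm H2) * \<bar>\<xi> k\<bar> * h \<le> 1/2) \<longrightarrow>
        (\<exists>C>0. \<forall>(G1::complex^'n^'n) (E1::complex^'n^'n).
            hermitian G1 \<longrightarrow> G1 = cadj E1 ** E1 \<longrightarrow>
            (\<forall>v. norm (comm G1 H2 *v v) \<le> C1 * (norm (E1 *v v) + norm v)) \<longrightarrow>
            (\<forall>v. norm (comm G1 (comm G1 H2) *v v) \<le> C2 * (norm (G1 *v v) + norm v)) \<longrightarrow>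
            (\<forall>v. let w = mprod K (\<lambda>k. mexp (csc (\<i> * of_real (h * \<xi> k))
                                              (if l k = 1 then G1 else H2))) *v v in
                 norm (G1 *v w) \<le> C * (norm (G1 *v v) + norm v)
               \<and> norm (H2 *v w) \<le> C * norm v
               \<and> norm (comm G1 H2 *v w) \<le> C * (sqrt (norm v * norm (G1 *v v)) + norm v)
               \<and> norm (comm G1 (comm G1 H2) *v w) \<le> C * (norm (G1 *v v) + norm v)
               \<and> norm (comm H2 (comm H2 G1) *v w) \<le> C * (norm (G1 *v v) + norm v))))"
proof (intro conjI allI impI, goal_cases)
  case (1 v)
  show ?case
    by (rule norm_factor_le[OF D1])
next
  case (2 \<xi> v)
  have "\<bar>\<xi>\<bar> * C1 \<le> (C1 + opnorm H2) * \<bar>\<xi>\<bar>"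
    using opnorm_nonneg[of H2] by (simp add: algebra_simps)
  with 2 have small: "\<bar>\<xi>\<bar> * C1 \<le> 1/2"
    by linarith
  have comm_bound: "\<And>x. norm (comm H1 H2 *v x) \<le> C1 * (norm (H1 *v x) + 2 * norm x)"
    using b1 by (blast intro: comm_bound_by_square[OF D1 C1])
  from norm_mult_mexp_le_double[OF herm2 C1 comm_bound small, of v]
  show ?case
    by simp
next
  case (3 K h l \<xi>)
  have "\<bar>h * \<xi> k\<bar> * C1 \<le> (C1 + opnorm H2) * \<bar>\<xi> k\<bar> * h" for k
    using \<open>h > 0\<close> opnorm_nonneg[of H2] by (simp add: abs_mult algebra_simps)
  with 3 have small: "\<forall>k\<in>{1..K}. \<bar>h * \<xi> k\<bar> * C1 \<le> 1/2"
    by (meson order_trans)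
  show ?case
  proof (intro exI[of _ "evolution_constant C1 C2 (opnorm H2) K"] conjI allI impI
      evolution_constant_pos C1 C2 opnorm_nonneg, goal_cases)
    case (1 G1 E1 v)
    then show ?case
      by (intro evolved_vector_bounds[OF _ herm2 _ C1 C2 _ _ small])
  qed
qed
end
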